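(* Let $X$ be a non-separable, non-reflexive real Banach space. If $X$ contains an overcomplete subset, then $X$ contains a bounded overcomplete subset which is not relatively weakly compact.
   Context: A subset $S$ of a Banach space $X$ with $|S| = \operatorname{dens} X$ (density character) is called overcomplete if every subset $\Lambda \subseteq S$ with $|\Lambda| = |S|$ is linearly dense in $X$. *)

theory Defs
  imports "HOL-Analysis.Analysis"
begin

definition dense_set :: "'a::real_normed_vector set \<Rightarrow> bool" where
  "dense_set D \<longleftrightarrow> closure D = UNIV"

definition card_eq_density :: "'a::real_normed_vector set \<Rightarrow> bool" where
  "card_eq_density (S::'a set) \<longleftrightarrow>
     (\<exists>D::'a set. dense_set D \<and> (card_of S, card_of D) \<in> ordIso) \<and>
     (\<forall>D::'a set. dense_set D \<longrightarrow> (card_of S, card_of D) \<in> ordLeq)"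

definition linearly_dense :: "'a::real_normed_vector set \<Rightarrow> bool" where
  "linearly_dense A \<longleftrightarrow> closure (span A) = UNIV"

definition overcomplete :: "'a::real_normed_vector set \<Rightarrow> bool" where
  "overcomplete S \<longleftrightarrow> card_eq_density S \<and>
     (\<forall>L. L \<subseteq> S \<and> (card_of L, card_of S) \<in> ordIso \<longrightarrow> linearly_dense L)"

definition weak_topology :: "'a::real_normed_vector topology" where
  "weak_topology = topology_generated_by
     {f -` U | (f :: 'a \<Rightarrow> real) U. bounded_linear f \<and> open U}"

definition relatively_weakly_compact :: "'a::real_normed_vector set \<Rightarrow> bool" where
  "relatively_weakly_compact S \<longleftrightarrow> compactin weak_topology (weak_topology closure_of S)"

definition reflexive_space :: "'a::real_normed_vector itself \<Rightarrow> bool" where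
  "reflexive_space _ \<longleftrightarrow>
     (\<forall>\<phi> :: ('a \<Rightarrow>\<^sub>L real) \<Rightarrow>\<^sub>L real. \<exists>x::'a. \<forall>f. blinfun_apply \<phi> f = blinfun_apply f x)"

end

theory Submission
  imports Defs "HOL-Library.Countable_Set_Type"
begin

text \<open>Non-reflexivity provides \<open>\<phi> \<in> X\<^sup>*\<^sup>*\<close> at positive distance \<open>\<theta>\<close> from the canonical
  image of \<open>X\<close>, which is closed because \<open>X\<close> is complete. Alternating Hahn-Banach and Helly's
  lemma produces a James sequence: functionals \<open>f\<^sub>n\<close> of norm at most 1 that vanish on
  \<open>x\<^sub>0, \<dots>, x\<^sub>n\<^sub>-\<^sub>1\<close> with \<open>\<phi>(f\<^sub>n) > \<theta>\<close>, and vectors \<open>x\<^sub>n\<close> of norm below \<open>\<parallel>\<phi>\<parallel> + 1\<close> with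
  \<open>f\<^sub>i(x\<^sub>n) = \<phi>(f\<^sub>i)\<close> for \<open>i \<le> n\<close>. A weak cluster point \<open>z\<close> of \<open>(x\<^sub>n)\<close> would satisfy
  \<open>f\<^sub>i(z) \<ge> \<theta>\<close> for all \<open>i\<close> while lying in the closed span of the \<open>x\<^sub>n\<close>, on which the \<open>f\<^sub>i\<close>
  eventually vanish; so no set containing the \<open>x\<^sub>n\<close> is relatively weakly compact. An overcomplete
  set is uncountable because \<open>X\<close> is non-separable, hence rescaling it into the unit ball, which
  does not change spans, and adding the countably many \<open>x\<^sub>n\<close> keeps it overcomplete.\<close>

section \<open>Hahn-Banach for sublinear functionals\<close>

lemma exists_real_between_sets:
  fixes A B :: "real set"
  assumes "A \<noteq> {}" "B \<noteq> {}" and le: "\<And>x y. x \<in> A \<Longrightarrow> y \<in> B \<Longrightarrow> x \<le> y"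
  obtains c where "\<And>x. x \<in> A \<Longrightarrow> x \<le> c" "\<And>y. y \<in> B \<Longrightarrow> c \<le> y"
proof
  have "bdd_above A" using assms by (meson bdd_aboveI ex_in_conv)
  then show "x \<le> Sup A" if "x \<in> A" for x using that by (simp add: cSup_upper)
  show "Sup A \<le> y" if "y \<in> B" for y by (rule cSup_least[OF assms(1)]) (simp add: le that)
qed

text \<open>A partial linear functional is represented by its graph; Zorn's lemma is applied to the
  graphs that extend \<open>l\<close> on \<open>W\<close> and are dominated by \<open>p\<close>.\<close>

definition dominated_linear_graph ::
    "('a::real_vector \<Rightarrow> real) \<Rightarrow> 'a set \<Rightarrow> ('a \<Rightarrow> real) \<Rightarrow> ('a \<times> real) set \<Rightarrow> bool" where
  "dominated_linear_graph p W l G \<longleftrightarrow>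
     (\<forall>a s b t. (a, s) \<in> G \<longrightarrow> (b, t) \<in> G \<longrightarrow> (a + b, s + t) \<in> G) \<and>
     (\<forall>a s c. (a, s) \<in> G \<longrightarrow> (c *\<^sub>R a, c * s) \<in> G) \<and>
     (\<forall>a s t. (a, s) \<in> G \<longrightarrow> (a, t) \<in> G \<longrightarrow> s = t) \<and>
     (\<forall>a s. (a, s) \<in> G \<longrightarrow> s \<le> p a) \<and>
     (\<forall>a\<in>W. (a, l a) \<in> G)"

lemma dominated_linear_graphI:
  assumes "\<And>a s b t. (a, s) \<in> G \<Longrightarrow> (b, t) \<in> G \<Longrightarrow> (a + b, s + t) \<in> G"
    and "\<And>a s c. (a, s) \<in> G \<Longrightarrow> (c *\<^sub>R a, c * s) \<in> G"
    and "\<And>a s t. (a, s) \<in> G \<Longrightarrow> (a, t) \<in> G \<Longrightarrow> s = t"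
    and "\<And>a s. (a, s) \<in> G \<Longrightarrow> s \<le> p a"
    and "\<And>a. a \<in> W \<Longrightarrow> (a, l a) \<in> G"
  shows "dominated_linear_graph p W l G"
  unfolding dominated_linear_graph_def using assms by blast

lemma dominated_linear_graphD:
  assumes "dominated_linear_graph p W l G"
  shows "\<And>a s b t. (a, s) \<in> G \<Longrightarrow> (b, t) \<in> G \<Longrightarrow> (a + b, s + t) \<in> G"
    and "\<And>a s c. (a, s) \<in> G \<Longrightarrow> (c *\<^sub>R a, c * s) \<in> G"
    and "\<And>a s t. (a, s) \<in> G \<Longrightarrow> (a, t) \<in> G \<Longrightarrow> s = t"
    and "\<And>a s. (a, s) \<in> G \<Longrightarrow> s \<le> p a"
    and "\<And>a. a \<in> W \<Longrightarrow> (a, l a) \<in> G"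
  using assms unfolding dominated_linear_graph_def by blast+

lemma dominated_linear_graph_Union:
  assumes "C \<noteq> {}" and chain: "subset.chain {G. dominated_linear_graph p W l G} C"
  shows "dominated_linear_graph p W l (\<Union>C)"
proof -
  have graph: "dominated_linear_graph p W l G" if "G \<in> C" for G
    using chain that by (auto simp: subset_chain_def)
  have common: "\<exists>G\<in>C. u \<in> G \<and> v \<in> G" if "u \<in> \<Union>C" "v \<in> \<Union>C" for u v
    using chain that unfolding subset_chain_def by blast
  show ?thesis
  proof (rule dominated_linear_graphI)
    fix a s b t assume "(a, s) \<in> \<Union>C" "(b, t) \<in> \<Union>C"
    then obtain G where "G \<in> C" "(a, s) \<in> G" "(b, t) \<in> G" using common by blast
    then show "(a + b, s + t) \<in> \<Union>C" using dominated_linear_graphD(1)[OF graph] by blast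
  next
    fix a s c assume "(a, s) \<in> \<Union>C"
    then obtain G where "G \<in> C" "(a, s) \<in> G" by blast
    then show "(c *\<^sub>R a, c * s) \<in> \<Union>C" using dominated_linear_graphD(2)[OF graph] by blast
  next
    fix a s t assume "(a, s) \<in> \<Union>C" "(a, t) \<in> \<Union>C"
    then obtain G where "G \<in> C" "(a, s) \<in> G" "(a, t) \<in> G" using common by blast
    then show "s = t" using dominated_linear_graphD(3)[OF graph] by blast
  next
    fix a s assume "(a, s) \<in> \<Union>C"
    then obtain G where "G \<in> C" "(a, s) \<in> G" by blast
    then show "s \<le> p a" using dominated_linear_graphD(4)[OF graph] by blast
  next
    fix a assume "a \<in> W"
    obtain G where "G \<in> C" using \<open>C \<noteq> {}\<close> by blast
    then show "(a, l a) \<in> \<Union>C" using dominated_linear_graphD(5)[OF graph] \<open>a \<in> W\<close> by blast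
  qed
qed

lemma dominated_linear_graph_adjoin_le:
  fixes p :: "'a::real_vector \<Rightarrow> real"
  assumes hom: "\<And>c a. c > 0 \<Longrightarrow> p (c *\<^sub>R a) = c * p a"
    and G: "dominated_linear_graph p W l G"
    and below: "\<And>a s. (a, s) \<in> G \<Longrightarrow> s - p (a - v) \<le> c"
    and above: "\<And>a s. (a, s) \<in> G \<Longrightarrow> c \<le> p (a + v) - s"
    and as: "(a, s) \<in> G"
  shows "s + t * c \<le> p (a + t *\<^sub>R v)"
proof (cases t "0::real" rule: linorder_cases)
  case less
  define u where "u = - t"
  have u: "u > 0" using less by (simp add: u_def)
  have "(inverse u *\<^sub>R a, inverse u * s) \<in> G" by (rule dominated_linear_graphD(2)[OF G as])
  then have "inverse u * s - p (inverse u *\<^sub>R a - v) \<le> c" by (rule below)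
  then have "s - u * p (inverse u *\<^sub>R a - v) \<le> u * c" using u by (simp add: field_simps)
  also have "u * p (inverse u *\<^sub>R a - v) = p (u *\<^sub>R (inverse u *\<^sub>R a - v))"
    by (rule hom[OF u, symmetric])
  also have "u *\<^sub>R (inverse u *\<^sub>R a - v) = a + t *\<^sub>R v"
    using u by (simp add: u_def algebra_simps)
  finally show ?thesis by (simp add: u_def)
next
  case equal
  then show ?thesis using dominated_linear_graphD(4)[OF G as] by simp
next
  case greater
  have "(inverse t *\<^sub>R a, inverse t * s) \<in> G" by (rule dominated_linear_graphD(2)[OF G as])
  then have "c \<le> p (inverse t *\<^sub>R a + v) - inverse t * s" by (rule above)
  then have "t * c \<le> t * p (inverse t *\<^sub>R a + v) - s" using greater by (simp add: field_simps)
  also have "t * p (inverse t *\<^sub>R a + v) = p (t *\<^sub>R (inverse t *\<^sub>R a + v))"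
    by (rule hom[OF greater, symmetric])
  also have "t *\<^sub>R (inverse t *\<^sub>R a + v) = a + t *\<^sub>R v"
    using greater by (simp add: algebra_simps)
  finally show ?thesis by simp
qed

lemma dominated_linear_graph_adjoin_coeff_unique:
  assumes G: "dominated_linear_graph p W l G" and v: "\<nexists>s. (v, s) \<in> G"
    and as: "(a, s) \<in> G" "(a', s') \<in> G" and eq: "a + t *\<^sub>R v = a' + t' *\<^sub>R v"
  shows "t = t'"
proof (rule ccontr)
  assume "t \<noteq> t'"
  have "(a' + (-1) *\<^sub>R a, s' + (-1) * s) \<in> G"
    by (rule dominated_linear_graphD(1)[OF G as(2) dominated_linear_graphD(2)[OF G as(1)]])
  then have "(inverse (t - t') *\<^sub>R (a' + (-1) *\<^sub>R a), inverse (t - t') * (s' + (-1) * s)) \<in> G"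
    by (rule dominated_linear_graphD(2)[OF G])
  moreover have "a' - a = (t - t') *\<^sub>R v" using eq by (simp add: algebra_simps)
  then have "inverse (t - t') *\<^sub>R (a' + (-1) *\<^sub>R a) = v" using \<open>t \<noteq> t'\<close> by simp
  ultimately show False using v by auto
qed

lemma dominated_linear_graph_adjoin:
  fixes p :: "'a::real_vector \<Rightarrow> real"
  assumes hom: "\<And>c a. c > 0 \<Longrightarrow> p (c *\<^sub>R a) = c * p a"
    and G: "dominated_linear_graph p W l G" and v: "\<nexists>s. (v, s) \<in> G"
    and below: "\<And>a s. (a, s) \<in> G \<Longrightarrow> s - p (a - v) \<le> c"
    and above: "\<And>a s. (a, s) \<in> G \<Longrightarrow> c \<le> p (a + v) - s"
  shows "dominated_linear_graph p W l {(a + t *\<^sub>R v, s + t * c) | a s t. (a, s) \<in> G}"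
    (is "dominated_linear_graph p W l ?G'")
proof -
  note add = dominated_linear_graphD(1)[OF G] and scale = dominated_linear_graphD(2)[OF G]
  have adjoinI: "(a + t *\<^sub>R v, s + t * c) \<in> ?G'" if "(a, s) \<in> G" for a s t
    using that by blast
  show ?thesis
  proof (rule dominated_linear_graphI)
    fix x y x' y' assume "(x, y) \<in> ?G'" "(x', y') \<in> ?G'"
    then obtain a s t a' s' t' where as: "(a, s) \<in> G" "(a', s') \<in> G"
      and "x = a + t *\<^sub>R v" "y = s + t * c" "x' = a' + t' *\<^sub>R v" "y' = s' + t' * c"
      by blast
    moreover have "(a + a' + (t + t') *\<^sub>R v, s + s' + (t + t') * c) \<in> ?G'"
      by (rule adjoinI, rule add) (fact as)+
    ultimately show "(x + x', y + y') \<in> ?G'" by (simp add: algebra_simps)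
  next
    fix x y k assume "(x, y) \<in> ?G'"
    then obtain a s t where as: "(a, s) \<in> G" and "x = a + t *\<^sub>R v" "y = s + t * c" by blast
    moreover have "(k *\<^sub>R a + (k * t) *\<^sub>R v, k * s + (k * t) * c) \<in> ?G'"
      by (rule adjoinI, rule scale) (fact as)
    ultimately show "(k *\<^sub>R x, k * y) \<in> ?G'" by (simp add: algebra_simps)
  next
    fix x y y' assume "(x, y) \<in> ?G'" "(x, y') \<in> ?G'"
    then obtain a s t a' s' t' where as: "(a, s) \<in> G" "(a', s') \<in> G"
      and eq: "x = a + t *\<^sub>R v" "y = s + t * c" "x = a' + t' *\<^sub>R v" "y' = s' + t' * c"
      by blast
    have "t = t'" using dominated_linear_graph_adjoin_coeff_unique[OF G v as] eq by simp
    with eq have "a = a'" by simp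
    then show "y = y'" using dominated_linear_graphD(3)[OF G] as eq \<open>t = t'\<close> by blast
  next
    fix x y assume "(x, y) \<in> ?G'"
    then obtain a s t where "(a, s) \<in> G" "x = a + t *\<^sub>R v" "y = s + t * c" by blast
    then show "y \<le> p x" using dominated_linear_graph_adjoin_le[OF hom G below above] by blast
  next
    fix a assume "a \<in> W"
    then show "(a, l a) \<in> ?G'" using adjoinI[of a "l a" 0] dominated_linear_graphD(5)[OF G] by simp
  qed
qed

lemma dominated_linear_graph_extend:
  fixes p :: "'a::real_vector \<Rightarrow> real"
  assumes sub: "\<And>a b. p (a + b) \<le> p a + p b" and hom: "\<And>c a. c > 0 \<Longrightarrow> p (c *\<^sub>R a) = c * p a"
    and G: "dominated_linear_graph p W l G" "G \<noteq> {}" and v: "\<nexists>s. (v, s) \<in> G"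
  obtains G' where "dominated_linear_graph p W l G'" "G \<subset> G'"
proof -
  obtain a0 s0 where "(a0, s0) \<in> G" using G(2) by auto
  from dominated_linear_graphD(2)[OF G(1) this, of 0] have zero: "(0, 0) \<in> G" by simp
  define A where "A = {s - p (a - v) | a s. (a, s) \<in> G}"
  define B where "B = {p (a + v) - s | a s. (a, s) \<in> G}"
  have "x \<le> y" if x: "x \<in> A" and y: "y \<in> B" for x y
  proof -
    obtain a s b u where as: "(a, s) \<in> G" "x = s - p (a - v)" and bu: "(b, u) \<in> G" "y = p (b + v) - u"
      using x y unfolding A_def B_def by blast
    have "s + u \<le> p (a + b)"
      using dominated_linear_graphD(4)[OF G(1) dominated_linear_graphD(1)[OF G(1) as(1) bu(1)]] .
    also have "\<dots> \<le> p (a - v) + p (b + v)" using sub[of "a - v" "b + v"] by simp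
    finally show ?thesis using as(2) bu(2) by simp
  qed
  moreover have "A \<noteq> {}" "B \<noteq> {}" using zero unfolding A_def B_def by blast+
  ultimately obtain c where "\<And>x. x \<in> A \<Longrightarrow> x \<le> c" "\<And>y. y \<in> B \<Longrightarrow> c \<le> y"
    using exists_real_between_sets by blast
  then have below: "\<And>a s. (a, s) \<in> G \<Longrightarrow> s - p (a - v) \<le> c"
    and above: "\<And>a s. (a, s) \<in> G \<Longrightarrow> c \<le> p (a + v) - s"
    unfolding A_def B_def by blast+
  let ?G' = "{(a + t *\<^sub>R v, s + t * c) | a s t. (a, s) \<in> G}"
  have "G \<subseteq> ?G'"
  proof
    fix x assume "x \<in> G"
    then show "x \<in> ?G'" by (intro CollectI exI[of _ "fst x"] exI[of _ "snd x"] exI[of _ 0]) simp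
  qed
  moreover have "(v, c) \<in> ?G'" using zero by (intro CollectI exI[of _ 0] exI[of _ 0] exI[of _ 1]) simp
  ultimately have "G \<subset> ?G'" using v by blast
  with dominated_linear_graph_adjoin[OF hom G(1) v below above] show ?thesis by (rule that)
qed

theorem sublinear_Hahn_Banach:
  fixes p :: "'a::real_vector \<Rightarrow> real"
  assumes sub: "\<And>a b. p (a + b) \<le> p a + p b" and hom: "\<And>c a. c > 0 \<Longrightarrow> p (c *\<^sub>R a) = c * p a"
    and W: "subspace W"
    and l_add: "\<And>a b. a \<in> W \<Longrightarrow> b \<in> W \<Longrightarrow> l (a + b) = l a + l b"
    and l_scale: "\<And>c a. a \<in> W \<Longrightarrow> l (c *\<^sub>R a) = c * l a"
    and l_le: "\<And>a. a \<in> W \<Longrightarrow> l a \<le> p a"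
  obtains g where "linear g" "\<And>a. a \<in> W \<Longrightarrow> g a = l a" "\<And>a. g a \<le> p a"
proof -
  let ?A = "{G. dominated_linear_graph p W l G}"
  have "dominated_linear_graph p W l {(a, l a) | a. a \<in> W}"
    by (rule dominated_linear_graphI)
      (auto simp: subspace_add[OF W] subspace_scale[OF W] l_add l_scale l_le)
  then have "?A \<noteq> {}" by blast
  moreover have "\<Union>C \<in> ?A" if "C \<noteq> {}" "subset.chain ?A C" for C
    using dominated_linear_graph_Union[OF that] by simp
  ultimately obtain M where M: "dominated_linear_graph p W l M"
    and maximal: "\<And>G. dominated_linear_graph p W l G \<Longrightarrow> M \<subseteq> G \<Longrightarrow> G = M"
    using subset_Zorn_nonempty[of ?A] by auto
  note graph = dominated_linear_graphD[OF M]
  have "M \<noteq> {}" using graph(5) subspace_0[OF W] by blast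
  have total: "\<exists>s. (a, s) \<in> M" for a
    using dominated_linear_graph_extend[OF sub hom M \<open>M \<noteq> {}\<close>, of a] maximal by blast
  define g where "g a = (THE s. (a, s) \<in> M)" for a
  have g_graph: "(a, g a) \<in> M" for a
  proof -
    obtain s where s: "(a, s) \<in> M" using total by blast
    show ?thesis unfolding g_def by (rule theI[of _ s]) (use s graph(3) in blast)+
  qed
  have g_eq: "g a = s" if "(a, s) \<in> M" for a s using graph(3)[OF that g_graph] by simp
  show ?thesis
  proof
    show "linear g"
    proof (rule linearI)
      show "g (a + b) = g a + g b" for a b by (rule g_eq[OF graph(1)[OF g_graph g_graph]])
      show "g (c *\<^sub>R a) = c *\<^sub>R g a" for c a using g_eq[OF graph(2)[OF g_graph]] by simp
    qed
    show "g a = l a" if "a \<in> W" for a by (rule g_eq[OF graph(5)[OF that]])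
    show "g a \<le> p a" for a by (rule graph(4)[OF g_graph])
  qed
qed

section \<open>Functionals on normed spaces and the bidual\<close>

lemma infdist_diff_subspace:
  fixes Y :: "'a::real_normed_vector set"
  assumes Y: "subspace Y" and y: "y \<in> Y"
  shows "infdist (z - y) Y = infdist z Y"
proof -
  have Y_ne: "Y \<noteq> {}" using subspace_0[OF Y] by blast
  have le: "infdist (z - y) Y \<le> infdist z Y" if "y \<in> Y" for z y
    unfolding infdist_notempty[OF Y_ne]
  proof (rule cINF_greatest[OF Y_ne])
    fix a assume "a \<in> Y"
    then have "a - y \<in> Y" using subspace_diff[OF Y _ that] by blast
    then have "(INF b\<in>Y. dist (z - y) b) \<le> dist (z - y) (a - y)"
      using infdist_le infdist_notempty[OF Y_ne] by metis
    then show "(INF b\<in>Y. dist (z - y) b) \<le> dist z a" by (simp add: dist_norm algebra_simps)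
  qed
  have "infdist z Y = infdist ((z - y) - (- y)) Y" by simp
  also have "\<dots> \<le> infdist (z - y) Y" by (rule le) (rule subspace_neg[OF Y y])
  finally show ?thesis using le[OF y, of z] by linarith
qed

lemma infdist_add_le_subspace:
  fixes Y :: "'a::real_normed_vector set"
  assumes Y: "subspace Y"
  shows "infdist (a + b) Y \<le> infdist a Y + infdist b Y"
proof -
  have Y_ne: "Y \<noteq> {}" using subspace_0[OF Y] by blast
  have "infdist (a + b) Y - infdist b Y \<le> dist a y" if y: "y \<in> Y" for y
  proof -
    have "infdist (a + b) Y = infdist (a + b - y) Y" using infdist_diff_subspace[OF Y y] by simp
    also have "\<dots> \<le> infdist b Y + dist (a + b - y) b" by (rule infdist_triangle)
    also have "dist (a + b - y) b = dist a y" by (simp add: dist_norm algebra_simps)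
    finally show ?thesis by simp
  qed
  then have "infdist (a + b) Y - infdist b Y \<le> infdist a Y"
    unfolding infdist_notempty[OF Y_ne] by (intro cINF_greatest[OF Y_ne])
  then show ?thesis by simp
qed

lemma infdist_scaleR_subspace:
  fixes Y :: "'a::real_normed_vector set"
  assumes Y: "subspace Y" and c: "c > 0"
  shows "infdist (c *\<^sub>R a) Y = c * infdist a Y"
proof -
  have Y_ne: "Y \<noteq> {}" using subspace_0[OF Y] by blast
  have le: "infdist (d *\<^sub>R z) Y \<le> d * infdist z Y" if "d > 0" for d z
  proof -
    have "infdist (d *\<^sub>R z) Y \<le> d * dist z y" if "y \<in> Y" for y
    proof -
      have "infdist (d *\<^sub>R z) Y \<le> dist (d *\<^sub>R z) (d *\<^sub>R y)"
        by (rule infdist_le) (rule subspace_scale[OF Y that])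
      also have "\<dots> = d * dist z y"
        using \<open>d > 0\<close> by (simp add: dist_norm flip: scaleR_diff_right)
      finally show ?thesis .
    qed
    then have "infdist (d *\<^sub>R z) Y / d \<le> infdist z Y"
      unfolding infdist_notempty[OF Y_ne, of z] using \<open>d > 0\<close>
      by (intro cINF_greatest[OF Y_ne]) (simp add: field_simps)
    then show ?thesis using \<open>d > 0\<close> by (simp add: field_simps)
  qed
  have "c * infdist a Y = c * infdist (inverse c *\<^sub>R (c *\<^sub>R a)) Y" using c by simp
  also have "\<dots> \<le> c * (inverse c * infdist (c *\<^sub>R a) Y)"
    using le[of "inverse c" "c *\<^sub>R a"] c by simp
  also have "\<dots> = infdist (c *\<^sub>R a) Y" using c by simp
  finally show ?thesis using le[OF c, of a] by linarith
qed

lemma linear_blinfun_apply: "linear (blinfun_apply f)"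
  by (rule bounded_linear.linear[OF blinfun.bounded_linear_right])

lemma linear_blinfun_apply_left: "linear (\<lambda>f. blinfun_apply f x)"
  by (rule bounded_linear.linear[OF blinfun.bounded_linear_left])

lemma linear_le_norm_imp_blinfun:
  fixes g :: "'a::real_normed_vector \<Rightarrow> real"
  assumes g: "linear g" and le: "\<And>z. g z \<le> norm z"
  obtains f :: "'a \<Rightarrow>\<^sub>L real" where "norm f \<le> 1" "blinfun_apply f = g"
proof -
  have abs: "\<bar>g z\<bar> \<le> norm z" for z
    using le[of z] le[of "- z"] linear_neg[OF g, of z] by simp
  have "bounded_linear g"
    using g abs by (auto simp: bounded_linear_def bounded_linear_axioms_def intro!: exI[of _ 1])
  then have app: "blinfun_apply (Blinfun g) = g" by (rule bounded_linear_Blinfun_apply)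
  have "norm (Blinfun g) \<le> 1" by (rule norm_blinfun_bound) (simp_all add: app abs)
  then show ?thesis using app by (rule that)
qed

lemma exists_blinfun_eq_infdist:
  fixes x :: "'a::real_normed_vector"
  assumes Y: "subspace Y"
  obtains f :: "'a \<Rightarrow>\<^sub>L real" where "norm f \<le> 1" "\<And>y. y \<in> Y \<Longrightarrow> f y = 0" "f x = infdist x Y"
proof (cases "x = 0")
  case True
  then show ?thesis using that[of 0] subspace_0[OF Y] by simp
next
  case False
  define l where "l z = (SOME t. z = t *\<^sub>R x) * infdist x Y" for z
  have l: "l (t *\<^sub>R x) = t * infdist x Y" for t
  proof -
    have "(SOME s. t *\<^sub>R x = s *\<^sub>R x) = t" by (rule some_equality) (use False in auto)
    then show ?thesis unfolding l_def by simp
  qed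
  obtain g where g: "linear g" "\<And>a. a \<in> span {x} \<Longrightarrow> g a = l a" "\<And>a. g a \<le> infdist a Y"
  proof (rule sublinear_Hahn_Banach[of "\<lambda>a. infdist a Y" "span {x}" l])
    show "infdist (c *\<^sub>R a) Y = c * infdist a Y" if "c > 0" for c a
      by (rule infdist_scaleR_subspace[OF Y that])
    show "l a \<le> infdist a Y" if "a \<in> span {x}" for a
    proof -
      obtain t where a: "a = t *\<^sub>R x" using \<open>a \<in> span {x}\<close> by (auto simp: span_singleton)
      show ?thesis
      proof (cases "t > 0")
        case True
        then show ?thesis using a l infdist_scaleR_subspace[OF Y True] by simp
      next
        case False
        then have "t * infdist x Y \<le> 0" by (metis mult_nonpos_nonneg not_less infdist_nonneg)
        then show ?thesis using a l infdist_nonneg[of a Y] by simp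
      qed
    qed
    show "subspace (span {x})" by (rule subspace_span)
  qed (auto simp: infdist_add_le_subspace[OF Y] span_singleton l algebra_simps simp flip: scaleR_add_left)
  have "g z \<le> norm z" for z
    using g(3)[of z] infdist_le[OF subspace_0[OF Y], of z] by simp
  then obtain f :: "'a \<Rightarrow>\<^sub>L real" where f: "norm f \<le> 1" "blinfun_apply f = g"
    using linear_le_norm_imp_blinfun[OF g(1)] by blast
  show ?thesis
  proof (rule that[OF f(1)])
    show "f y = 0" if "y \<in> Y" for y
      using g(3)[of y] g(3)[of "- y"] linear_neg[OF g(1), of y] subspace_neg[OF Y that] that
      by (simp add: f(2))
    show "f x = infdist x Y" using g(2)[of x] l[of 1] by (simp add: f(2) span_base)
  qed
qed

lemma exists_norming_blinfun:
  fixes x :: "'a::real_normed_vector"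
  obtains f :: "'a \<Rightarrow>\<^sub>L real" where "norm f \<le> 1" "f x = norm x"
  using exists_blinfun_eq_infdist[OF subspace_single_0, of x] by auto

lemma kernel_subset_imp_linear_combination:
  fixes g :: "'i \<Rightarrow> 'a::real_vector \<Rightarrow> real" and h :: "'a \<Rightarrow> real"
  assumes "finite I" "\<And>i. i \<in> I \<Longrightarrow> linear (g i)" "linear h"
    and "\<And>z. (\<forall>i\<in>I. g i z = 0) \<Longrightarrow> h z = 0"
  shows "\<exists>c. \<forall>z. h z = (\<Sum>i\<in>I. c i * g i z)"
  using assms
proof (induction I arbitrary: h rule: finite_induct)
  case empty
  then show ?case by auto
next
  case (insert j I)
  have lin_g: "linear (g i)" if "i \<in> insert j I" for i using insert.prems(1) that .
  have lin_h: "linear h" by (fact insert.prems(2))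
  txt \<open>On the common kernel of the \<open>g i\<close>, \<open>i \<in> I\<close>, the functional \<open>h\<close> is a multiple of \<open>g j\<close>.\<close>
  obtain a where a: "\<And>z. \<forall>i\<in>I. g i z = 0 \<Longrightarrow> h z = a * g j z"
  proof (cases "\<exists>z0. (\<forall>i\<in>I. g i z0 = 0) \<and> g j z0 \<noteq> 0")
    case True
    then obtain z0 where z0: "\<forall>i\<in>I. g i z0 = 0" "g j z0 \<noteq> 0" by blast
    show ?thesis
    proof (rule that[of "h z0 / g j z0"])
      fix z assume z: "\<forall>i\<in>I. g i z = 0"
      define w where "w = z - (g j z / g j z0) *\<^sub>R z0"
      have "g i w = 0" if "i \<in> insert j I" for i
        using z z0 that by (auto simp: w_def linear_diff[OF lin_g[OF that]] linear_scale[OF lin_g[OF that]])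
      then have "h w = 0" using insert.prems(3) by blast
      then show "h z = h z0 / g j z0 * g j z"
        using z0(2) by (simp add: w_def linear_diff[OF lin_h] linear_scale[OF lin_h] field_simps)
    qed
  next
    case False
    then show ?thesis using that[of 0] insert.prems(3) by fastforce
  qed
  have "linear (\<lambda>z. h z - a * g j z)"
    using lin_h lin_g[of j] by (auto simp: linear_iff algebra_simps)
  then obtain c where c: "\<And>z. h z - a * g j z = (\<Sum>i\<in>I. c i * g i z)"
    using insert.IH[of "\<lambda>z. h z - a * g j z"] insert.prems(1) a by auto
  have "h z = (\<Sum>i\<in>insert j I. (c(j := a)) i * g i z)" for z
  proof -
    have "(\<Sum>i\<in>I. (c(j := a)) i * g i z) = (\<Sum>i\<in>I. c i * g i z)"
      using insert.hyps(2) by (intro sum.cong) auto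
    then show ?thesis using c[of z] insert.hyps by simp
  qed
  then show ?case by blast
qed

lemma bidual_apply_linear_combination:
  fixes \<phi> :: "('a::real_normed_vector \<Rightarrow>\<^sub>L real) \<Rightarrow>\<^sub>L real" and g :: "'a \<Rightarrow>\<^sub>L real"
  assumes "\<And>z. g z = (\<Sum>f\<in>F. c f * blinfun_apply f z)"
  shows "\<phi> g = (\<Sum>f\<in>F. c f * \<phi> f)"
proof -
  have "g = (\<Sum>f\<in>F. c f *\<^sub>R f)"
    by (rule blinfun_eqI) (simp add: assms blinfun.sum_left blinfun.scaleR_left)
  then show ?thesis by (simp add: blinfun.sum_right blinfun.scaleR_right)
qed

lemma exists_point_interpolating_bidual:
  fixes \<phi> :: "('a::real_normed_vector \<Rightarrow>\<^sub>L real) \<Rightarrow>\<^sub>L real"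
  assumes "finite F"
  shows "\<exists>x. \<forall>f\<in>F. blinfun_apply f x = \<phi> f"
  using assms
proof (induction F rule: finite_induct)
  case empty
  then show ?case by auto
next
  case (insert h F)
  then obtain x where x: "\<forall>f\<in>F. blinfun_apply f x = \<phi> f" by blast
  show ?case
  proof (cases "\<exists>z. (\<forall>f\<in>F. f z = 0) \<and> h z \<noteq> 0")
    case True
    then obtain z where z: "\<forall>f\<in>F. f z = 0" "h z \<noteq> 0" by blast
    have "\<forall>f\<in>insert h F. blinfun_apply f (x + ((\<phi> h - h x) / h z) *\<^sub>R z) = \<phi> f"
      using x z by (auto simp: blinfun.add_right blinfun.scaleR_right)
    then show ?thesis by blast
  next
    case False
    then obtain c where c: "\<And>z. h z = (\<Sum>f\<in>F. c f * blinfun_apply f z)"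
      using kernel_subset_imp_linear_combination[of F blinfun_apply "blinfun_apply h"]
        insert.hyps(1) linear_blinfun_apply by blast
    have "\<phi> h = (\<Sum>f\<in>F. c f * \<phi> f)" by (rule bidual_apply_linear_combination) (rule c)
    also have "\<dots> = h x" using x by (simp add: c)
    finally show ?thesis using x by auto
  qed
qed

lemma Helly_approximation:
  fixes \<phi> :: "('a::real_normed_vector \<Rightarrow>\<^sub>L real) \<Rightarrow>\<^sub>L real"
  assumes F: "finite F" and r: "norm \<phi> < r"
  shows "\<exists>x. norm x < r \<and> (\<forall>f\<in>F. blinfun_apply f x = \<phi> f)"
proof -
  obtain x0 where x0: "\<forall>f\<in>F. blinfun_apply f x0 = \<phi> f" using exists_point_interpolating_bidual[OF F] by blast
  define N where "N = {z. \<forall>f\<in>F. f z = 0}"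
  have N: "subspace N" unfolding N_def subspace_def
    by (auto simp: blinfun.add_right blinfun.scaleR_right)
  obtain g :: "'a \<Rightarrow>\<^sub>L real" where g: "norm g \<le> 1" "\<And>y. y \<in> N \<Longrightarrow> g y = 0" "g x0 = infdist x0 N"
    using exists_blinfun_eq_infdist[OF N] by blast
  obtain c where c: "\<And>z. g z = (\<Sum>f\<in>F. c f * blinfun_apply f z)"
    using kernel_subset_imp_linear_combination[of F blinfun_apply "blinfun_apply g"] F g(2)
      linear_blinfun_apply unfolding N_def by blast
  have "infdist x0 N = \<phi> g"
    using g(3) x0 by (simp add: c bidual_apply_linear_combination[of g, OF c])
  also have "\<dots> \<le> norm \<phi> * norm g" using norm_blinfun[of \<phi> g] by simp
  also have "\<dots> \<le> norm \<phi>" using g(1) by (simp add: mult_left_le)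
  finally have "infdist x0 N < r" using r by linarith
  moreover have "N \<noteq> {}" using subspace_0[OF N] by blast
  ultimately obtain n where "n \<in> N" "dist x0 n < r"
    using cInf_lessD[of "dist x0 ` N" r] by (auto simp: infdist_notempty)
  then show ?thesis using x0 by (intro exI[of _ "x0 - n"]) (auto simp: N_def dist_norm blinfun.diff_right)
qed

lemma evaluation_if_bidual_approximable:
  fixes \<phi> :: "('a::banach \<Rightarrow>\<^sub>L real) \<Rightarrow>\<^sub>L real" and x :: "nat \<Rightarrow> 'a"
  assumes approx: "\<And>n f. \<bar>\<phi> f - f (x n)\<bar> \<le> e n * norm f" and e: "e \<longlonglongrightarrow> 0"
  obtains y where "\<And>f. \<phi> f = f y"
proof -
  have dist: "norm (x n - x m) \<le> \<bar>e n\<bar> + \<bar>e m\<bar>" for n m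
  proof -
    obtain f :: "'a \<Rightarrow>\<^sub>L real" where f: "norm f \<le> 1" "f (x n - x m) = norm (x n - x m)"
      using exists_norming_blinfun by blast
    have "norm (x n - x m) = (\<phi> f - f (x m)) - (\<phi> f - f (x n))"
      using f(2) by (simp add: blinfun.diff_right)
    also have "\<dots> \<le> e m * norm f + e n * norm f"
      using approx[where n = m and f = f] approx[where n = n and f = f] by linarith
    also have "\<dots> \<le> \<bar>e n\<bar> + \<bar>e m\<bar>"
      using f(1) by (smt (verit) abs_ge_self mult_left_le norm_ge_zero abs_ge_zero mult_right_mono)
    finally show ?thesis .
  qed
  have "Cauchy x"
  proof (rule metric_CauchyI)
    fix \<epsilon> :: real assume "\<epsilon> > 0"
    then have "\<epsilon> / 2 > 0" by simp
    then obtain M where M: "\<forall>n\<ge>M. norm (e n - 0) < \<epsilon> / 2" using e unfolding LIMSEQ_iff by blast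
    have "dist (x m) (x n) < \<epsilon>" if "m \<ge> M" "n \<ge> M" for m n
      using dist[of m n] M[rule_format, OF that(1)] M[rule_format, OF that(2)]
      by (simp add: dist_norm)
    then show "\<exists>M. \<forall>m\<ge>M. \<forall>n\<ge>M. dist (x m) (x n) < \<epsilon>" by blast
  qed
  then obtain y where y: "x \<longlonglongrightarrow> y" using Cauchy_convergent convergent_def by blast
  have "\<phi> f = f y" for f
  proof (rule LIMSEQ_unique)
    show "(\<lambda>n. f (x n)) \<longlonglongrightarrow> f y"
      by (rule bounded_linear.tendsto[OF blinfun.bounded_linear_right y])
    have "(\<lambda>n. \<phi> f - f (x n)) \<longlonglongrightarrow> 0"
      by (rule Lim_null_comparison[of _ "\<lambda>n. e n * norm f"])
        (use approx in \<open>auto intro: tendsto_mult_left_zero e\<close>)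
    then have "(\<lambda>n. \<phi> f - (\<phi> f - f (x n))) \<longlonglongrightarrow> \<phi> f - 0" by (intro tendsto_diff) auto
    then show "(\<lambda>n. f (x n)) \<longlonglongrightarrow> \<phi> f" by simp
  qed
  then show ?thesis by (rule that)
qed

lemma bidual_dist_pos_if_not_evaluation:
  fixes \<phi> :: "('a::banach \<Rightarrow>\<^sub>L real) \<Rightarrow>\<^sub>L real"
  assumes not_eval: "\<And>y. \<exists>f. \<phi> f \<noteq> f y"
  obtains \<theta> where "\<theta> > 0" "\<And>x. \<exists>f. \<theta> * norm f < \<bar>\<phi> f - f x\<bar>"
proof -
  have "\<exists>\<theta>>0. \<forall>x. \<exists>f. \<theta> * norm f < \<bar>\<phi> f - f x\<bar>"
  proof (rule ccontr)
    assume "\<not> ?thesis"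
    then have "\<forall>n. \<exists>x. \<forall>f. \<bar>\<phi> f - f x\<bar> \<le> inverse (real (Suc n)) * norm f"
      by (metis not_le of_nat_0_less_iff positive_imp_inverse_positive zero_less_Suc)
    then obtain x where x: "\<And>n f. \<bar>\<phi> f - f (x n)\<bar> \<le> inverse (real (Suc n)) * norm f"
      by metis
    obtain y where "\<And>f. \<phi> f = f y"
      using evaluation_if_bidual_approximable[OF x LIMSEQ_inverse_real_of_nat] by blast
    then show False using not_eval by blast
  qed
  then show ?thesis using that by blast
qed

lemma bidual_near_evaluation_if_bounded_on_annihilator:
  fixes \<phi> :: "('a::real_normed_vector \<Rightarrow>\<^sub>L real) \<Rightarrow>\<^sub>L real"
  assumes \<theta>: "\<theta> \<ge> 0" and E: "finite E"
    and bound: "\<And>f. \<forall>e\<in>E. blinfun_apply f e = 0 \<Longrightarrow> \<phi> f \<le> \<theta> * norm f"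
  shows "\<exists>x. \<forall>f. \<bar>\<phi> f - f x\<bar> \<le> \<theta> * norm f"
proof -
  define N where "N = {f :: 'a \<Rightarrow>\<^sub>L real. \<forall>e\<in>E. f e = 0}"
  have N: "subspace N" unfolding N_def subspace_def
    by (auto simp: blinfun.add_left blinfun.scaleR_left)
  obtain \<Lambda> where \<Lambda>: "linear \<Lambda>" "\<And>f. f \<in> N \<Longrightarrow> \<Lambda> f = \<phi> f" "\<And>f. \<Lambda> f \<le> \<theta> * norm f"
  proof (rule sublinear_Hahn_Banach[of "\<lambda>f. \<theta> * norm f" N "blinfun_apply \<phi>"])
    show "\<theta> * norm (f + g) \<le> \<theta> * norm f + \<theta> * norm g" for f g :: "'a \<Rightarrow>\<^sub>L real"
      using mult_left_mono[OF norm_triangle_ineq[of f g] \<theta>] by (simp add: distrib_left)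
  qed (use N bound in \<open>auto simp: N_def blinfun.add_right blinfun.scaleR_right\<close>)
  txt \<open>\<open>\<phi> - \<Lambda>\<close> vanishes on the annihilator \<open>N\<close> of \<open>E\<close>, so it is the evaluation at a point of
    \<open>span E\<close>.\<close>
  have "linear (\<lambda>f. \<phi> f - \<Lambda> f)"
    using \<Lambda>(1) by (auto simp: linear_iff blinfun.add_right blinfun.scaleR_right algebra_simps)
  then have "\<exists>c. \<forall>f. \<phi> f - \<Lambda> f = (\<Sum>e\<in>E. c e * blinfun_apply f e)"
    using \<Lambda>(2) linear_blinfun_apply_left
    by (intro kernel_subset_imp_linear_combination[OF E]) (auto simp: N_def)
  then obtain c where c: "\<And>f. \<phi> f - \<Lambda> f = (\<Sum>e\<in>E. c e * blinfun_apply f e)" by blast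
  define x where "x = (\<Sum>e\<in>E. c e *\<^sub>R e)"
  have "\<bar>\<phi> f - f x\<bar> \<le> \<theta> * norm f" for f
  proof -
    have "\<phi> f - f x = \<Lambda> f"
      using c[of f] by (simp add: x_def blinfun.sum_right blinfun.scaleR_right)
    moreover have "- \<Lambda> f \<le> \<theta> * norm f" using \<Lambda>(3)[of "- f"] linear_neg[OF \<Lambda>(1), of f] by simp
    ultimately show ?thesis using \<Lambda>(3)[of f] by linarith
  qed
  then show ?thesis by blast
qed

lemma exists_annihilating_blinfun_bidual_large:
  fixes \<phi> :: "('a::real_normed_vector \<Rightarrow>\<^sub>L real) \<Rightarrow>\<^sub>L real"
  assumes \<theta>: "\<theta> \<ge> 0" and far: "\<And>x. \<exists>f. \<theta> * norm f < \<bar>\<phi> f - f x\<bar>" and E: "finite E"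
  shows "\<exists>f :: 'a \<Rightarrow>\<^sub>L real. norm f \<le> 1 \<and> (\<forall>e\<in>E. blinfun_apply f e = 0) \<and> \<theta> < \<phi> f"
proof (rule ccontr)
  assume small: "\<not> ?thesis"
  have "\<phi> f \<le> \<theta> * norm f" if "\<forall>e\<in>E. blinfun_apply f e = 0" for f :: "'a \<Rightarrow>\<^sub>L real"
  proof (cases "f = 0")
    case False
    have "norm (inverse (norm f) *\<^sub>R f) \<le> 1"
      and "\<forall>e\<in>E. blinfun_apply (inverse (norm f) *\<^sub>R f) e = 0"
      using that False by (simp_all add: blinfun.scaleR_left)
    then have "\<phi> (inverse (norm f) *\<^sub>R f) \<le> \<theta>" using small by (meson not_le)
    then show ?thesis using False by (simp add: blinfun.scaleR_right field_simps)
  qed simp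
  then obtain x where "\<And>f. \<bar>\<phi> f - f x\<bar> \<le> \<theta> * norm f"
    using bidual_near_evaluation_if_bounded_on_annihilator[OF \<theta> E] by blast
  then show False using far[of x] by (meson not_le)
qed

section \<open>Weak topology and James sequences\<close>

lemma openin_weak_topology_vimage:
  fixes f :: "'a::real_normed_vector \<Rightarrow> real"
  assumes "bounded_linear f" "open U"
  shows "openin weak_topology (f -` U)"
  unfolding weak_topology_def by (rule topology_generated_by_Basis) (use assms in blast)

lemma topspace_weak_topology [simp]: "topspace (weak_topology :: 'a::real_normed_vector topology) = UNIV"
proof -
  have "openin weak_topology ((\<lambda>_::'a. 0::real) -` UNIV)"
    by (rule openin_weak_topology_vimage) (simp_all add: bounded_linear_zero)
  then show ?thesis using openin_subset by fastforce
qed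

lemma closedin_weak_topology_halfspace:
  fixes f :: "'a::real_normed_vector \<Rightarrow> real"
  assumes "bounded_linear f"
  shows "closedin weak_topology {z. c \<le> f z}"
proof -
  have "openin weak_topology (f -` {..<c})" by (rule openin_weak_topology_vimage[OF assms]) simp
  moreover have "f -` {..<c} = UNIV - {z. c \<le> f z}" by auto
  ultimately show ?thesis by (simp add: closedin_def)
qed

lemma weak_closure_of_subset_closure_span:
  fixes A :: "'a::real_normed_vector set"
  shows "weak_topology closure_of A \<subseteq> closure (span A)"
proof
  fix z assume z: "z \<in> weak_topology closure_of A"
  show "z \<in> closure (span A)"
  proof (rule ccontr)
    assume "z \<notin> closure (span A)"
    moreover have "span A \<noteq> {}" using span_zero by blast
    ultimately have "infdist z (span A) \<noteq> 0" using in_closure_iff_infdist_zero by blast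
    then have pos: "infdist z (span A) > 0" using infdist_nonneg[of z "span A"] by linarith
    obtain f :: "'a \<Rightarrow>\<^sub>L real" where f: "\<And>y. y \<in> span A \<Longrightarrow> f y = 0" "f z = infdist z (span A)"
      using exists_blinfun_eq_infdist[OF subspace_span, of A z] by blast
    have "openin weak_topology (f -` {0<..})"
      by (rule openin_weak_topology_vimage) (simp_all add: blinfun.bounded_linear_right)
    moreover have "z \<in> f -` {0<..}" using pos f(2) by simp
    ultimately obtain a where "a \<in> A" "a \<in> f -` {0<..}" using z unfolding in_closure_of by metis
    then show False using f(1)[OF span_base] by simp
  qed
qed

lemma compactin_closure_of_imp_cluster_point:
  fixes x :: "nat \<Rightarrow> 'a"
  assumes "compactin X (X closure_of S)" and "range x \<subseteq> S" and "S \<subseteq> topspace X"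
  obtains z where "\<And>m. z \<in> X closure_of (x ` {m..})"
proof -
  define T where "T m = X closure_of (x ` {m..})" for m
  have "x k \<in> T m" if "m \<le> k" for m k
    unfolding T_def by (rule subsetD[OF closure_of_subset]) (use that assms(2,3) in auto)
  moreover have "x k \<in> X closure_of S" for k
    using assms(2,3) closure_of_subset by blast
  ultimately have fip: "(X closure_of S) \<inter> \<Inter>\<F> \<noteq> {}" if F: "finite \<F>" "\<F> \<subseteq> range T" for \<F>
  proof -
    obtain M :: "nat set" where M: "finite M" "\<F> = T ` M" using finite_subset_image[OF F] by blast
    define k where "k = (if M = {} then 0 else Max M)"
    have "m \<le> k" if "m \<in> M" for m using M(1) that by (auto simp: k_def)
    then have "x k \<in> (X closure_of S) \<inter> \<Inter>\<F>"
      using M(2) \<open>\<And>m k. m \<le> k \<Longrightarrow> x k \<in> T m\<close> \<open>\<And>k. x k \<in> X closure_of S\<close> by blast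
    then show ?thesis by blast
  qed
  have "\<forall>C\<in>range T. closedin X C" unfolding T_def by simp
  then have "(X closure_of S) \<inter> \<Inter>(range T) \<noteq> {}"
    using assms(1) fip unfolding compactin_fip by blast
  then show ?thesis using that unfolding T_def by blast
qed

lemma span_eventually_annihilated:
  fixes x :: "nat \<Rightarrow> 'a::real_normed_vector" and f :: "nat \<Rightarrow> 'a \<Rightarrow>\<^sub>L real"
  assumes vanish: "\<And>i k. k < i \<Longrightarrow> f i (x k) = 0" and y: "y \<in> span (range x)"
  obtains m where "\<And>i. i \<ge> m \<Longrightarrow> f i y = 0"
proof -
  define V where "V = {w. \<exists>m. \<forall>i\<ge>m. f i w = 0}"
  have "span (range x) \<subseteq> V"
  proof (rule span_minimal)
    show "range x \<subseteq> V"
    proof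
      fix w assume "w \<in> range x"
      then obtain k where "w = x k" by blast
      then show "w \<in> V" unfolding V_def by (intro CollectI exI[of _ "Suc k"]) (simp add: vanish)
    qed
    show "subspace V"
    proof (rule subspaceI)
      show "0 \<in> V" unfolding V_def by simp
      fix a b assume "a \<in> V" "b \<in> V"
      then obtain ma mb where "\<forall>i\<ge>ma. f i a = 0" "\<forall>i\<ge>mb. f i b = 0" unfolding V_def by blast
      then show "a + b \<in> V"
        unfolding V_def by (intro CollectI exI[of _ "max ma mb"]) (simp add: blinfun.add_right)
    next
      fix c a assume "a \<in> V"
      then show "c *\<^sub>R a \<in> V" unfolding V_def by (auto simp: blinfun.scaleR_right)
    qed
  qed
  then show ?thesis using y that unfolding V_def by blast
qed

lemma not_relatively_weakly_compact_if_James_sequence: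
  fixes x :: "nat \<Rightarrow> 'a::real_normed_vector" and f :: "nat \<Rightarrow> 'a \<Rightarrow>\<^sub>L real"
  assumes \<theta>: "\<theta> > 0"
    and vanish: "\<And>i k. k < i \<Longrightarrow> f i (x k) = 0"
    and large: "\<And>i k. i \<le> k \<Longrightarrow> \<theta> \<le> f i (x k)"
    and norm_f: "\<And>i. norm (f i) \<le> 1"
    and S: "range x \<subseteq> S"
  shows "\<not> relatively_weakly_compact S"
proof
  assume "relatively_weakly_compact S"
  then obtain z where z: "\<And>m. z \<in> weak_topology closure_of (x ` {m..})"
    unfolding relatively_weakly_compact_def by (rule compactin_closure_of_imp_cluster_point[OF _ S]) auto
  have z_large: "\<theta> \<le> f i z" for i
  proof -
    have "weak_topology closure_of (x ` {i..}) \<subseteq> {z. \<theta> \<le> f i z}"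
      by (rule closure_of_minimal)
        (use large in \<open>auto intro: closedin_weak_topology_halfspace blinfun.bounded_linear_right\<close>)
    then show ?thesis using z[of i] by blast
  qed
  have "z \<in> closure (span (range x))"
    using z[of 0] weak_closure_of_subset_closure_span[of "range x"] by (auto simp: atLeast_0)
  then obtain y where y: "y \<in> span (range x)" "norm (z - y) < \<theta>"
    using \<theta> by (auto simp: closure_approachable dist_norm norm_minus_commute)
  obtain m where "\<And>i. i \<ge> m \<Longrightarrow> f i y = 0"
    using span_eventually_annihilated[of f x, OF vanish y(1)] by blast
  then have "f m y = 0" by simp
  then have "f m z = f m (z - y)" by (simp add: blinfun.diff_right)
  also have "\<dots> \<le> norm (f m) * norm (z - y)" using norm_blinfun[of "f m" "z - y"] by simp
  also have "\<dots> \<le> norm (z - y)" using norm_f[of m] by (simp add: mult_left_le_one_le)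
  finally show False using z_large[of m] y(2) by linarith
qed

section \<open>Overcomplete sets\<close>

lemma countable_iff_ordIso:
  assumes "(card_of A, card_of B) \<in> ordIso"
  shows "countable A \<longleftrightarrow> countable B"
proof -
  have "(card_of A, card_of B) \<in> ordLeq" "(card_of B, card_of A) \<in> ordLeq"
    using assms unfolding ordIso_iff_ordLeq by auto
  then show ?thesis using countable_ordLeq by metis
qed

lemma card_of_Un_countable_ordIso:
  assumes A: "\<not> countable A" and B: "countable B"
  shows "(card_of (A \<union> B), card_of A) \<in> ordIso"
proof -
  have A_inf: "\<not> finite A" using A countable_finite by blast
  have "(card_of B, card_of (UNIV :: nat set)) \<in> ordLeq" using B countable_card_of_nat by blast
  also have "(card_of (UNIV :: nat set), card_of A) \<in> ordLeq" using A_inf infinite_iff_card_of_nat by blast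
  finally have "(card_of B, card_of A) \<in> ordLeq" .
  moreover have "(card_of A, card_of A) \<in> ordLeq" by (rule ordLeq_refl[OF card_of_Card_order])
  ultimately have "(card_of (A \<union> B), card_of A) \<in> ordLeq"
    using card_of_Un_ordLeq_infinite_Field[of "card_of A" A B] A_inf
    by (simp add: Field_card_of card_of_Card_order card_of_card_order_on)
  moreover have "(card_of A, card_of (A \<union> B)) \<in> ordLeq" by (rule card_of_mono1) blast
  ultimately show ?thesis unfolding ordIso_iff_ordLeq by blast
qed

lemma card_of_Int_ordIso_if_Un_countable:
  assumes A: "\<not> countable A" and B: "countable B" and L: "L \<subseteq> A \<union> B"
    and iso: "(card_of L, card_of (A \<union> B)) \<in> ordIso"
  shows "(card_of (L \<inter> A), card_of A) \<in> ordIso"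
proof -
  have L_iso: "(card_of L, card_of A) \<in> ordIso"
    using ordIso_transitive[OF iso card_of_Un_countable_ordIso[OF A B]] .
  have L_split: "(L \<inter> A) \<union> (L \<inter> B) = L" using L by blast
  have LB: "countable (L \<inter> B)" using B by (rule countable_subset[rotated]) blast
  moreover have "\<not> countable (L \<inter> A)"
  proof
    assume "countable (L \<inter> A)"
    then have "countable L" using LB L_split countable_Un by metis
    then show False using countable_iff_ordIso[OF L_iso] A by blast
  qed
  ultimately have "(card_of L, card_of (L \<inter> A)) \<in> ordIso"
    using card_of_Un_countable_ordIso[of "L \<inter> A" "L \<inter> B"] L_split by simp
  then show ?thesis using ordIso_transitive[OF ordIso_symmetric L_iso] by blast
qed

lemma card_eq_density_ordIso:
  fixes S T :: "'a::real_normed_vector set"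
  assumes "card_eq_density S" and "(card_of T, card_of S) \<in> ordIso"
  shows "card_eq_density T"
proof -
  obtain D :: "'a set" where D: "dense_set D" "(card_of S, card_of D) \<in> ordIso"
    using assms(1) unfolding card_eq_density_def by blast
  have "(card_of T, card_of D) \<in> ordIso" by (rule ordIso_transitive[OF assms(2) D(2)])
  moreover have "(card_of T, card_of D') \<in> ordLeq" if "dense_set D'" for D' :: "'a set"
  proof -
    have "(card_of S, card_of D') \<in> ordLeq" using assms(1) that unfolding card_eq_density_def by blast
    then show ?thesis by (rule ordIso_ordLeq_trans[OF assms(2)])
  qed
  ultimately show ?thesis using D(1) unfolding card_eq_density_def by blast
qed

lemma uncountable_if_card_eq_density:
  fixes S :: "'a::real_normed_vector set"
  assumes "\<not> separable_space (euclidean :: 'a topology)" and "card_eq_density S"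
  shows "\<not> countable S"
proof
  assume "countable S"
  obtain D :: "'a set" where "dense_set D" "(card_of S, card_of D) \<in> ordIso"
    using assms(2) unfolding card_eq_density_def by blast
  then have "countable D" "closure D = UNIV"
    using \<open>countable S\<close> countable_iff_ordIso unfolding dense_set_def by blast+
  then have "separable_space (euclidean :: 'a topology)"
    unfolding separable_space_def by (auto simp: euclidean_closure_of)
  with assms(1) show False by blast
qed

lemma linearly_dense_mono:
  assumes "linearly_dense A" and "A \<subseteq> span B"
  shows "linearly_dense B"
proof -
  have "span A \<subseteq> span B" using assms(2) by (rule span_minimal) (rule subspace_span)
  then show ?thesis using assms(1) closure_mono unfolding linearly_dense_def by blast
qed

lemma overcomplete_Un_countable:
  assumes oc: "overcomplete S" and S: "\<not> countable S" and C: "countable C"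
  shows "overcomplete (S \<union> C)"
proof -
  have iso: "(card_of (S \<union> C), card_of S) \<in> ordIso" by (rule card_of_Un_countable_ordIso[OF S C])
  have "linearly_dense L" if L: "L \<subseteq> S \<union> C" "(card_of L, card_of (S \<union> C)) \<in> ordIso" for L
  proof -
    have "(card_of (L \<inter> S), card_of S) \<in> ordIso"
      by (rule card_of_Int_ordIso_if_Un_countable[OF S C L])
    then have "linearly_dense (L \<inter> S)" using oc unfolding overcomplete_def by blast
    then show ?thesis by (rule linearly_dense_mono) (auto intro: span_base)
  qed
  then show ?thesis using oc card_eq_density_ordIso[OF _ iso] unfolding overcomplete_def by blast
qed

lemma overcomplete_rescale:
  fixes c :: "'a::real_normed_vector \<Rightarrow> real"
  assumes oc: "overcomplete S" and c: "\<And>s. c s \<noteq> 0" and inj: "inj_on (\<lambda>s. c s *\<^sub>R s) S"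
  shows "overcomplete ((\<lambda>s. c s *\<^sub>R s) ` S)"
proof -
  let ?g = "\<lambda>s. c s *\<^sub>R s"
  have image_iso: "(card_of (?g ` A), card_of A) \<in> ordIso" if "A \<subseteq> S" for A
    using inj_on_subset[OF inj that] by (rule ordIso_symmetric[OF card_of_ordIsoI[OF inj_on_imp_bij_betw]])
  have "linearly_dense L" if L: "L \<subseteq> ?g ` S" "(card_of L, card_of (?g ` S)) \<in> ordIso" for L
  proof -
    define L0 where "L0 = S \<inter> ?g -` L"
    have "L0 \<subseteq> S" unfolding L0_def by blast
    have "?g ` L0 = L" using L(1) unfolding L0_def by blast
    then have "(card_of L0, card_of L) \<in> ordIso" using ordIso_symmetric[OF image_iso[OF \<open>L0 \<subseteq> S\<close>]] by simp
    also note L(2)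
    also have "(card_of (?g ` S), card_of S) \<in> ordIso" by (rule image_iso) simp
    finally have "(card_of L0, card_of S) \<in> ordIso" .
    then have "linearly_dense L0" using oc unfolding overcomplete_def L0_def by blast
    moreover have "L0 \<subseteq> span L"
    proof
      fix s assume "s \<in> L0"
      then have "inverse (c s) *\<^sub>R ?g s \<in> span L" unfolding L0_def by (intro span_scale span_base) simp
      then show "s \<in> span L" using c[of s] by simp
    qed
    ultimately show ?thesis by (rule linearly_dense_mono)
  qed
  moreover have "card_eq_density (?g ` S)"
    using oc image_iso[of S] card_eq_density_ordIso unfolding overcomplete_def by blast
  ultimately show ?thesis unfolding overcomplete_def by blast
qed

lemma norm_scaleR_inverse_one_plus_norm_le: "norm (inverse (1 + norm x) *\<^sub>R x) \<le> 1"
proof -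
  have "0 < 1 + norm x" by (simp add: add_pos_nonneg)
  then show ?thesis by (simp add: field_simps)
qed

lemma inj_scaleR_inverse_one_plus_norm:
  "inj (\<lambda>x::'a::real_normed_vector. inverse (1 + norm x) *\<^sub>R x)"
proof (rule injI)
  fix x y :: 'a
  assume eq: "inverse (1 + norm x) *\<^sub>R x = inverse (1 + norm y) *\<^sub>R y"
  have pos: "1 + norm x > 0" "1 + norm y > 0" by (simp_all add: add_pos_nonneg)
  have "norm x / (1 + norm x) = norm y / (1 + norm y)"
    using arg_cong[OF eq, of norm] pos by (simp add: divide_inverse mult.commute)
  then have "norm x = norm y" using pos by (simp add: field_simps)
  then show "x = y" using eq pos by simp
qed

lemma overcomplete_shrink_into_unit_ball:
  fixes S :: "'a::real_normed_vector set"
  defines "S' \<equiv> (\<lambda>s. inverse (1 + norm s) *\<^sub>R s) ` S"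
  assumes S: "overcomplete S"
  shows "overcomplete S'" and "bounded S'" and "countable S' \<longleftrightarrow> countable S"
proof -
  have inj: "inj_on (\<lambda>s. inverse (1 + norm s) *\<^sub>R s) S"
    by (rule inj_on_subset[OF inj_scaleR_inverse_one_plus_norm subset_UNIV])
  have "inverse (1 + norm s) \<noteq> 0" for s :: 'a
    using norm_ge_zero[of s] by (simp add: add_nonneg_eq_0_iff)
  then show "overcomplete S'" unfolding S'_def by (rule overcomplete_rescale[OF S _ inj])
  show "bounded S'" unfolding S'_def bounded_iff using norm_scaleR_inverse_one_plus_norm_le by blast
  show "countable S' \<longleftrightarrow> countable S" unfolding S'_def using countable_image_inj_on inj by blast
qed

section \<open>James sequences in non-reflexive spaces\<close>

definition interleaved_prefix ::
    "('x set \<Rightarrow> 'y \<Rightarrow> bool) \<Rightarrow> ('y set \<Rightarrow> 'x \<Rightarrow> bool) \<Rightarrow> nat \<Rightarrow> (nat \<Rightarrow> 'y \<times> 'x) \<Rightarrow> bool" where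
  "interleaved_prefix P Q n g \<longleftrightarrow>
     (\<forall>i<n. P ((snd \<circ> g) ` {..<i}) (fst (g i)) \<and> Q ((fst \<circ> g) ` {..i}) (snd (g i)))"

lemma interleaved_prefix_extend:
  assumes P: "\<And>E. finite E \<Longrightarrow> \<exists>a. P E a" and Q: "\<And>F. finite F \<Longrightarrow> \<exists>b. Q F b"
    and g: "interleaved_prefix P Q n g"
  obtains a b where "interleaved_prefix P Q (Suc n) (g(n := (a, b)))"
proof -
  obtain a where a: "P ((snd \<circ> g) ` {..<n}) a" using P[of "(snd \<circ> g) ` {..<n}"] by auto
  obtain b where b: "Q (insert a ((fst \<circ> g) ` {..<n})) b"
    using Q[of "insert a ((fst \<circ> g) ` {..<n})"] by auto
  define g' where "g' = g(n := (a, b))"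
  have "P ((snd \<circ> g') ` {..<i}) (fst (g' i)) \<and> Q ((fst \<circ> g') ` {..i}) (snd (g' i))" if "i < Suc n" for i
  proof (cases "i = n")
    case True
    have "{..n} = insert n {..<n}" by auto
    moreover have "(snd \<circ> g') ` {..<n} = (snd \<circ> g) ` {..<n}" "(fst \<circ> g') ` {..<n} = (fst \<circ> g) ` {..<n}"
      by (auto simp: g'_def)
    ultimately show ?thesis using True a b by (simp add: g'_def)
  next
    case False
    with \<open>i < Suc n\<close> have "i < n" by simp
    then have "(snd \<circ> g') ` {..<i} = (snd \<circ> g) ` {..<i}" "(fst \<circ> g') ` {..i} = (fst \<circ> g) ` {..i}"
      "g' i = g i"
      by (auto simp: g'_def)
    then show ?thesis using g \<open>i < n\<close> by (simp add: interleaved_prefix_def)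
  qed
  then show ?thesis using that[of a b] unfolding interleaved_prefix_def g'_def by blast
qed

lemma interleaved_choice:
  assumes P: "\<And>E. finite E \<Longrightarrow> \<exists>a. P E a" and Q: "\<And>F. finite F \<Longrightarrow> \<exists>b. Q F b"
  shows "\<exists>a b. \<forall>n::nat. P (b ` {..<n}) (a n) \<and> Q (a ` {..n}) (b n)"
proof -
  have "\<exists>h. \<forall>n. interleaved_prefix P Q n (h n) \<and> (\<forall>i<n. h (Suc n) i = h n i)"
  proof (rule dependent_nat_choice)
    show "\<exists>g. interleaved_prefix P Q 0 g" by (simp add: interleaved_prefix_def)
    show "\<exists>g'. interleaved_prefix P Q (Suc n) g' \<and> (\<forall>i<n. g' i = g i)"
      if "interleaved_prefix P Q n g" for g n
      using interleaved_prefix_extend[OF P Q that] by (metis fun_upd_other nat_neq_iff)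
  qed
  then obtain h where good: "\<And>n. interleaved_prefix P Q n (h n)"
    and stable: "\<And>n i. i < n \<Longrightarrow> h (Suc n) i = h n i"
    by blast
  have h_eq: "h n i = h (Suc i) i" if "i < n" for n i
    using that by (induction n) (auto simp: stable less_Suc_eq)
  define a where "a i = fst (h (Suc i) i)" for i
  define b where "b i = snd (h (Suc i) i)" for i
  have "P (b ` {..<n}) (a n) \<and> Q (a ` {..n}) (b n)" for n
  proof -
    have "h (Suc n) i = h (Suc i) i" if "i \<le> n" for i using h_eq[of i "Suc n"] that by simp
    then have "(snd \<circ> h (Suc n)) ` {..<n} = b ` {..<n}" "(fst \<circ> h (Suc n)) ` {..n} = a ` {..n}"
      unfolding a_def b_def by (auto intro!: image_cong)
    then show ?thesis using good[of "Suc n"] unfolding interleaved_prefix_def a_def b_def by auto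
  qed
  then show ?thesis by blast
qed

lemma James_sequence_if_not_reflexive:
  assumes "\<not> reflexive_space TYPE('a)"
  obtains x :: "nat \<Rightarrow> 'a::banach"
  where "bounded (range x)" "\<And>S. range x \<subseteq> S \<Longrightarrow> \<not> relatively_weakly_compact S"
proof -
  obtain \<phi> :: "('a \<Rightarrow>\<^sub>L real) \<Rightarrow>\<^sub>L real" where "\<And>y. \<exists>f. \<phi> f \<noteq> f y"
    using assms unfolding reflexive_space_def by blast
  then obtain \<theta> where \<theta>: "\<theta> > 0" and far: "\<And>x. \<exists>f. \<theta> * norm f < \<bar>\<phi> f - f x\<bar>"
    by (rule bidual_dist_pos_if_not_evaluation) blast
  define r where "r = norm \<phi> + 1"
  have annihilating: "\<exists>f :: 'a \<Rightarrow>\<^sub>L real. norm f \<le> 1 \<and> (\<forall>e\<in>E. blinfun_apply f e = 0) \<and> \<theta> < \<phi> f"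
    if "finite E" for E
    by (rule exists_annihilating_blinfun_bidual_large[OF less_imp_le[OF \<theta>] far that])
  have interpolating: "\<exists>y. norm y < r \<and> (\<forall>g\<in>F. blinfun_apply g y = \<phi> g)" if "finite F" for F
    by (rule Helly_approximation[OF that]) (simp add: r_def)
  have "\<exists>f x. \<forall>n::nat. (norm (f n) \<le> 1 \<and> (\<forall>e\<in>x ` {..<n}. blinfun_apply (f n) e = 0) \<and> \<theta> < \<phi> (f n)) \<and>
      (norm (x n) < r \<and> (\<forall>g\<in>f ` {..n}. blinfun_apply g (x n) = \<phi> g))"
    by (rule interleaved_choice[of
          "\<lambda>E f. norm f \<le> 1 \<and> (\<forall>e\<in>E. blinfun_apply f e = 0) \<and> \<theta> < \<phi> f"
          "\<lambda>F y. norm y < r \<and> (\<forall>g\<in>F. blinfun_apply g y = \<phi> g)"])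
      (simp_all add: annihilating interpolating)
  then obtain f :: "nat \<Rightarrow> 'a \<Rightarrow>\<^sub>L real" and x :: "nat \<Rightarrow> 'a"
    where f: "\<And>n. norm (f n) \<le> 1 \<and> (\<forall>e\<in>x ` {..<n}. f n e = 0) \<and> \<theta> < \<phi> (f n)"
      and x: "\<And>n. norm (x n) < r \<and> (\<forall>g\<in>f ` {..n}. blinfun_apply g (x n) = \<phi> g)"
    by blast
  show ?thesis
  proof
    have "norm (x n) \<le> r" for n using x[of n] by simp
    then show "bounded (range x)" unfolding bounded_iff by blast
    show "\<not> relatively_weakly_compact S" if "range x \<subseteq> S" for S
    proof (rule not_relatively_weakly_compact_if_James_sequence[OF \<theta> _ _ _ that])
      show "f i (x k) = 0" if "k < i" for i k using f[of i] that by auto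
      show "\<theta> \<le> f i (x k)" if "i \<le> k" for i k
      proof -
        have "f i (x k) = \<phi> (f i)" using x[of k] that by simp
        then show ?thesis using f[of i] by simp
      qed
      show "norm (f i) \<le> 1" for i using f[of i] by blast
    qed
  qed
qed

theorem proposition4p4:
  assumes nonsep: "\<not> separable_space (euclidean :: 'a::banach topology)"
    and nonrefl: "\<not> reflexive_space TYPE('a)"
    and oc: "\<exists>S :: 'a set. overcomplete S"
  shows "\<exists>S :: 'a set. overcomplete S \<and> bounded S \<and> \<not> relatively_weakly_compact S"
proof -
  obtain S :: "'a set" where S: "overcomplete S" using oc by blast
  define S' where "S' = (\<lambda>s. inverse (1 + norm s) *\<^sub>R s) ` S"
  have "\<not> countable S" using uncountable_if_card_eq_density[OF nonsep] S by (simp add: overcomplete_def)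
  then have S': "overcomplete S'" "bounded S'" "\<not> countable S'"
    using overcomplete_shrink_into_unit_ball[OF S] unfolding S'_def by auto
  obtain x :: "nat \<Rightarrow> 'a" where x_bounded: "bounded (range x)"
    and x_not_rwc: "\<And>T. range x \<subseteq> T \<Longrightarrow> \<not> relatively_weakly_compact T"
    using James_sequence_if_not_reflexive[OF nonrefl] by blast
  have "overcomplete (S' \<union> range x)" using overcomplete_Un_countable[OF S'(1,3)] by simp
  moreover have "bounded (S' \<union> range x)" using S'(2) x_bounded by simp
  moreover have "\<not> relatively_weakly_compact (S' \<union> range x)" by (rule x_not_rwc) blast
  ultimately show ?thesis by blast
qed

end
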